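(* Let $H$ be a real Hilbert space with inner product $(\cdot,\cdot)_H$ and norm $\|\cdot\|_H$. Let $\mathcal{L}$ be a symmetric positive definite linear operator on $H$ and $f:H\to\mathbb{R}$ Fréchet differentiable with $\nabla f$ Lipschitz continuous with constant $L$. For each $\Phi\in H$ let $\mathbf{L}(\Phi)=\mathbf{M}(\Phi)+\mathbf{S}(\Phi)$ with $\mathbf{S}(\Phi)$ skew-symmetric and $-\mathbf{M}(\Phi)$ symmetric positive definite, and assume there are constants $\alpha_{\mathbf{M}},\beta_{\mathbf{S}}>0$ such that for all $\Phi,\Psi_1,\Psi_2,\Psi\in H$: $(\mathbf{S}(\Phi)\Psi_1,\Psi_2)_H\le\beta_{\mathbf{S}}\|\Psi_1\|_H\|\Psi_2\|_H$ and $(-\mathbf{M}(\Phi)\Psi,\Psi)_H\ge\alpha_{\mathbf{M}}\|\Psi\|_H^2$. Let $\tau>0$, $A>0$, let $\Phi^{n-1},\Phi^n\in H$ and $\hat\Phi^{n+\frac12}\in H$ be given, and suppose $\Phi^{n+1}$ satisfies the SGE-SCN scheme $$\frac{\Phi^{n+1}-\Phi^n}{\tau}=\mathbf{L}(\hat\Phi^{n+\frac12})\mu^{n+\frac12},\qquad \mu^{n+\frac12}=\mathcal{L}\Phi^{n+\frac12}-\tau A\,\mathbf{M}(\hat\Phi^{n+\frac12})(\Phi^{n+1}-\Phi^n)+\tfrac32\nabla f(\Phi^n)-\tfrac12\nabla f(\Phi^{n-1}),$$ with $\Phi^{n+\frac12}=\frac12(\Phi^{n+1}+\Phi^n)$.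 Define $$\tilde E_{CN}(\Phi^{k+1},\Phi^k)=\tfrac12\|\mathcal{L}^{1/2}\Phi^{k+1}\|_H^2+f(\Phi^{k+1})+\tfrac L4\|\Phi^{k+1}-\Phi^k\|_H^2 .$$ Then, provided $A\ge\frac{L^2}{4}\big(1+\frac{\beta_{\mathbf{S}}}{\alpha_{\mathbf{M}}}\big)^2$ (so that the right-hand side below is nonpositive), $$\tilde E_{CN}(\Phi^{n+1},\Phi^n)-\tilde E_{CN}(\Phi^n,\Phi^{n-1})\le-\Big(2\big(1+\tfrac{\beta_{\mathbf{S}}}{\alpha_{\mathbf{M}}}\big)^{-1}\sqrt A-L\Big)\|\Phi^{n+1}-\Phi^n\|_H^2 .$$
   Context: $\|\mathcal{L}^{1/2}\Phi\|_H^2=(\Phi,\mathcal{L}\Phi)_H$. Skew-symmetric: $(\mathbf{S}\Phi,\Psi)_H=-(\Phi,\mathbf{S}\Psi)_H$. *)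

theory Defs
  imports "HOL-Analysis.Analysis"
begin

definition sym_op :: "('a::real_inner \<Rightarrow> 'a) \<Rightarrow> bool" where
  "sym_op T \<longleftrightarrow> linear T \<and> (\<forall>x y. inner (T x) y = inner x (T y))"

definition skew_op :: "('a::real_inner \<Rightarrow> 'a) \<Rightarrow> bool" where
  "skew_op T \<longleftrightarrow> linear T \<and> (\<forall>x y. inner (T x) y = - inner x (T y))"

definition spd_op :: "('a::real_inner \<Rightarrow> 'a) \<Rightarrow> bool" where
  "spd_op T \<longleftrightarrow> sym_op T \<and> (\<forall>x. x \<noteq> 0 \<longrightarrow> inner (T x) x > 0)"

text \<open>Modified Crank-Nicolson energy; the term \<open>\<parallel>\<L>^{1/2}\<Phi>\<parallel>^2\<close> equals \<open>(\<Phi>, \<L>\<Phi>)\<close>.\<close>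
definition E_CN :: "('a::real_inner \<Rightarrow> 'a) \<Rightarrow> ('a \<Rightarrow> real) \<Rightarrow> real \<Rightarrow> 'a \<Rightarrow> 'a \<Rightarrow> real" where
  "E_CN Lop f L x1 x0 = (1/2) * inner x1 (Lop x1) + f x1 + (L/4) * (norm (x1 - x0))\<^sup>2"

end

theory Submission
  imports Defs
begin

text \<open>Write \<open>d = \<Phi>\<^sup>n\<^sup>+\<^sup>1 - \<Phi>\<^sup>n\<close> and \<open>P = -\<M>(\<Phi>hat)\<close>, so that the scheme reads
  \<open>d = \<tau> (S \<mu> - P \<mu>)\<close>. Testing it with \<open>\<mu>\<close> kills the skew part and gives \<open>(\<mu>, d) = -\<tau> (P \<mu>, \<mu>)\<close>;
  testing the definition of \<open>\<mu>\<close> with \<open>d\<close> and using the descent lemma for \<open>f\<close> together with the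
  Lipschitz bound on the extrapolated gradient, the energy difference is at most
  \<open>-\<tau> (P \<mu>, \<mu>) - \<tau> A (P d, d) + L \<parallel>d\<parallel>\<^sup>2\<close>. Finally, testing the scheme with \<open>d\<close> and applying the
  Cauchy-Schwarz inequality of the form \<open>(P \<cdot>, \<cdot>)\<close> bounds \<open>\<alpha> \<parallel>d\<parallel>\<^sup>2\<close> by
  \<open>\<tau> (\<alpha> + \<beta>) \<surd>((P \<mu>, \<mu>) (P d, d))\<close>, and AM-GM turns this into the stated dissipation.
  The estimate holds for every \<open>A > 0\<close>.\<close>

lemma nonneg_quadratic_discriminant:
  fixes a b p :: real
  assumes nonneg: "\<And>t. 0 \<le> a + 2 * t * p + t\<^sup>2 * b" and "0 \<le> b"
  shows "p\<^sup>2 \<le> a * b"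
proof (cases "b = 0")
  case True
  have "p = 0"
  proof (rule ccontr)
    assume "p \<noteq> 0"
    then have "a + 2 * (- (\<bar>a\<bar> + 1) / (2 * p)) * p = - \<bar>a\<bar> - 1 + a"
      by (simp add: field_simps)
    moreover have "0 \<le> a + 2 * (- (\<bar>a\<bar> + 1) / (2 * p)) * p"
      using nonneg[of "- (\<bar>a\<bar> + 1) / (2 * p)"] True by simp
    ultimately show False by linarith
  qed
  then show ?thesis using True by simp
next
  case False
  then have "b > 0" using \<open>0 \<le> b\<close> by simp
  have "a + 2 * (- p / b) * p + (- p / b)\<^sup>2 * b = a - p\<^sup>2 / b"
    using \<open>b > 0\<close> by (simp add: field_simps power2_eq_square)
  then have "p\<^sup>2 / b \<le> a" using nonneg[of "- p / b"] by linarith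
  then show ?thesis using \<open>b > 0\<close> by (simp add: divide_le_eq mult.commute)
qed

lemma sym_op_cauchy_schwarz:
  assumes P: "sym_op P" and P_nonneg: "\<And>x. 0 \<le> inner (P x) x"
  shows "(inner (P x) y)\<^sup>2 \<le> inner (P x) x * inner (P y) y"
proof (rule nonneg_quadratic_discriminant)
  fix t :: real
  have "linear P" and "inner (P y) x = inner (P x) y"
    using P unfolding sym_op_def by (auto simp: inner_commute)
  then have "inner (P (x + t *\<^sub>R y)) (x + t *\<^sub>R y)
      = inner (P x) x + 2 * t * inner (P x) y + t\<^sup>2 * inner (P y) y"
    by (simp add: linear_add linear_scale inner_add_left inner_add_right power2_eq_square
        algebra_simps)
  then show "0 \<le> inner (P x) x + 2 * t * inner (P x) y + t\<^sup>2 * inner (P y) y"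
    using P_nonneg[of "x + t *\<^sub>R y"] by simp
qed (rule P_nonneg)

lemma coercive_inner_nonneg:
  assumes "\<And>x. \<alpha> * (norm x)\<^sup>2 \<le> inner (P x) x" and "0 \<le> \<alpha>"
  shows "0 \<le> inner (P x) x"
  using assms(1)[of x] assms(2) by (meson order_trans zero_le_mult_iff zero_le_power2)

lemma skew_op_inner_self:
  assumes "skew_op T"
  shows "inner (T x) x = 0"
  using assms unfolding skew_op_def by (metis inner_commute neg_equal_zero)

lemma E_CN_diff:
  assumes "sym_op Lop"
  shows "E_CN Lop f L x1 x0 - E_CN Lop f L x0 xm
    = inner (Lop ((1/2) *\<^sub>R (x1 + x0))) (x1 - x0) + (f x1 - f x0)
      + L/4 * ((norm (x1 - x0))\<^sup>2 - (norm (x0 - xm))\<^sup>2)"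
proof -
  have "linear Lop" and "inner (Lop x1) x0 = inner (Lop x0) x1"
    using assms unfolding sym_op_def by (auto simp: inner_commute)
  then show ?thesis unfolding E_CN_def
    by (simp add: linear_add linear_scale inner_add_left inner_diff_right inner_commute
        algebra_simps)
qed

lemma lipschitz_gradient_upper_bound:
  fixes f :: "'a::real_inner \<Rightarrow> real" and gradf :: "'a \<Rightarrow> 'a"
  assumes fderiv: "\<And>x. (f has_derivative (\<lambda>h. inner (gradf x) h)) (at x)"
    and lip: "\<And>x y. norm (gradf x - gradf y) \<le> L * norm (x - y)"
  shows "f y - f x - inner (gradf x) (y - x) \<le> L / 2 * (norm (y - x))\<^sup>2"
proof -
  define d where "d = y - x"
  define g where "g t = f (x + t *\<^sub>R d) - t * inner (gradf x) d - L/2 * t\<^sup>2 * (norm d)\<^sup>2"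
    for t :: real
  define g' where "g' t = inner (gradf (x + t *\<^sub>R d) - gradf x) d - L * t * (norm d)\<^sup>2"
    for t :: real
  have g_deriv: "(g has_real_derivative g' t) (at t)" for t
  proof -
    have "((\<lambda>t. x + t *\<^sub>R d) has_derivative (\<lambda>h. h *\<^sub>R d)) (at t)"
      by (auto intro!: derivative_eq_intros)
    from has_derivative_compose[OF this fderiv]
    have "((\<lambda>t. f (x + t *\<^sub>R d)) has_real_derivative inner (gradf (x + t *\<^sub>R d)) d) (at t)"
      unfolding has_field_derivative_def by (simp add: mult.commute[of _ "inner _ _"])
    then show ?thesis unfolding g_def g'_def
      by (auto intro!: derivative_eq_intros simp: inner_diff_left)
  qed
  have g'_nonpos: "g' t \<le> 0" if "0 < t" for t
  proof -
    have "inner (gradf (x + t *\<^sub>R d) - gradf x) d \<le> norm (gradf (x + t *\<^sub>R d) - gradf x) * norm d"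
      by (rule norm_cauchy_schwarz)
    also have "\<dots> \<le> L * norm (t *\<^sub>R d) * norm d"
      using lip[of "x + t *\<^sub>R d" x] by (simp add: mult_right_mono)
    also have "\<dots> = L * t * (norm d)\<^sup>2"
      using that by (simp add: power2_eq_square)
    finally show ?thesis unfolding g'_def by simp
  qed
  have "g 1 \<le> g 0"
  proof (rule DERIV_nonpos_imp_decreasing_open[of 0 1 g])
    show "\<exists>y. DERIV g t :> y \<and> y \<le> 0" if "0 < t" for t
      using g_deriv g'_nonpos[OF that] by blast
    show "continuous_on {0..1} g"
      using g_deriv by (meson DERIV_isCont continuous_at_imp_continuous_on)
  qed simp
  then show ?thesis unfolding g_def d_def by simp
qed

lemma lipschitz_gradient_extrapolation_bound:
  assumes lip: "\<And>x y. norm (gradf x - gradf y) \<le> L * norm (x - y)" and "0 \<le> L"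
  shows "- inner (gradf x - gradf y) d \<le> L/2 * ((norm (x - y))\<^sup>2 + (norm d)\<^sup>2)"
proof -
  have "- inner (gradf x - gradf y) d \<le> norm (gradf x - gradf y) * norm d"
    using norm_cauchy_schwarz[of "gradf y - gradf x" d]
    by (simp add: norm_minus_commute inner_diff_left)
  also have "\<dots> \<le> L * norm (x - y) * norm d"
    using lip[of x y] by (simp add: mult_right_mono)
  also have "\<dots> \<le> L/2 * ((norm (x - y))\<^sup>2 + (norm d)\<^sup>2)"
    using mult_left_mono[OF sum_squares_bound[of "norm (x - y)" "norm d"] \<open>0 \<le> L\<close>]
    by (simp add: algebra_simps)
  finally show ?thesis .
qed

lemma skew_step_inner_mu:
  assumes "skew_op S" and d: "d = \<tau> *\<^sub>R (S \<mu> - P \<mu>)"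
  shows "inner \<mu> d = - \<tau> * inner (P \<mu>) \<mu>"
  using skew_op_inner_self[OF assms(1), of \<mu>]
  by (simp add: d inner_diff_right inner_commute)

lemma skew_step_norm_bound:
  fixes P S :: "'a::real_inner \<Rightarrow> 'a"
  assumes P: "sym_op P" and P_coerc: "\<And>x. \<alpha> * (norm x)\<^sup>2 \<le> inner (P x) x"
    and S_bound: "\<And>x y. inner (S x) y \<le> \<beta> * norm x * norm y"
    and "0 < \<alpha>" "0 \<le> \<beta>" "0 \<le> \<tau>"
    and d: "d = \<tau> *\<^sub>R (S \<mu> - P \<mu>)"
  shows "\<alpha> * (norm d)\<^sup>2 \<le> \<tau> * (\<alpha> + \<beta>) * sqrt (inner (P \<mu>) \<mu> * inner (P d) d)"
proof -
  define X where "X = sqrt (inner (P \<mu>) \<mu> * inner (P d) d)"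
  have P_nonneg: "0 \<le> inner (P x) x" for x
    using coercive_inner_nonneg[OF P_coerc] \<open>0 < \<alpha>\<close> by simp
  have p_bound: "\<bar>inner (P \<mu>) d\<bar> \<le> X"
    unfolding X_def by (rule real_le_rsqrt) (simp add: sym_op_cauchy_schwarz[OF P P_nonneg])
  have "(\<alpha> * norm \<mu> * norm d)\<^sup>2 = (\<alpha> * (norm \<mu>)\<^sup>2) * (\<alpha> * (norm d)\<^sup>2)"
    by (simp add: power2_eq_square)
  also have "\<dots> \<le> inner (P \<mu>) \<mu> * inner (P d) d"
    using P_coerc \<open>0 < \<alpha>\<close> by (intro mult_mono) (auto intro: P_nonneg)
  finally have mu_d_bound: "\<alpha> * norm \<mu> * norm d \<le> X"
    unfolding X_def by (rule real_le_rsqrt)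
  have "(norm d)\<^sup>2 = inner (\<tau> *\<^sub>R (S \<mu> - P \<mu>)) d"
    by (simp only: power2_norm_eq_inner flip: d)
  then have "\<alpha> * (norm d)\<^sup>2 = \<alpha> * \<tau> * (inner (S \<mu>) d - inner (P \<mu>) d)"
    by (simp add: inner_diff_left)
  also have "\<dots> \<le> \<alpha> * \<tau> * (\<beta> * norm \<mu> * norm d + \<bar>inner (P \<mu>) d\<bar>)"
    using S_bound[of \<mu> d] abs_ge_minus_self[of "inner (P \<mu>) d"] \<open>0 < \<alpha>\<close> \<open>0 \<le> \<tau>\<close>
    by (intro mult_left_mono) auto
  also have "\<dots> = \<tau> * (\<beta> * (\<alpha> * norm \<mu> * norm d) + \<alpha> * \<bar>inner (P \<mu>) d\<bar>)"
    by (simp add: algebra_simps)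
  also have "\<dots> \<le> \<tau> * (\<beta> * X + \<alpha> * X)"
    using p_bound mu_d_bound assms(4-6) by (intro mult_left_mono add_mono) auto
  finally show ?thesis unfolding X_def by (simp add: algebra_simps)
qed

lemma skew_step_stabilization_bound:
  fixes P S :: "'a::real_inner \<Rightarrow> 'a"
  assumes P: "sym_op P" and P_coerc: "\<And>x. \<alpha> * (norm x)\<^sup>2 \<le> inner (P x) x"
    and S_bound: "\<And>x y. inner (S x) y \<le> \<beta> * norm x * norm y"
    and "0 < \<alpha>" "0 \<le> \<beta>" "0 \<le> \<tau>" "0 \<le> A"
    and d: "d = \<tau> *\<^sub>R (S \<mu> - P \<mu>)"
  shows "2 * inverse (1 + \<beta> / \<alpha>) * sqrt A * (norm d)\<^sup>2
    \<le> \<tau> * inner (P \<mu>) \<mu> + \<tau> * A * inner (P d) d"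
proof -
  define a b where "a = inner (P \<mu>) \<mu>" and "b = inner (P d) d"
  have "0 \<le> a" "0 \<le> b"
    unfolding a_def b_def using coercive_inner_nonneg[OF P_coerc] \<open>0 < \<alpha>\<close> by simp_all
  have "inverse (1 + \<beta> / \<alpha>) = \<alpha> / (\<alpha> + \<beta>)"
    using assms(4,5) by (simp add: field_simps)
  then have "2 * inverse (1 + \<beta> / \<alpha>) * sqrt A * (norm d)\<^sup>2
      = 2 * sqrt A * (\<alpha> * (norm d)\<^sup>2) / (\<alpha> + \<beta>)"
    by simp
  also have "\<dots> \<le> 2 * sqrt A * (\<tau> * (\<alpha> + \<beta>) * sqrt (a * b)) / (\<alpha> + \<beta>)"
    using skew_step_norm_bound[OF assms(1-6) d] assms(4,5,7) unfolding a_def b_def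
    by (intro divide_right_mono mult_left_mono) auto
  also have "\<dots> = \<tau> * (2 * sqrt (a * (A * b)))"
    using assms(4,5) by (simp add: real_sqrt_mult field_simps)
  also have "\<dots> \<le> \<tau> * (a + A * b)"
    using arith_geo_mean_sqrt[of a "A * b"] \<open>0 \<le> a\<close> \<open>0 \<le> b\<close> \<open>0 \<le> A\<close> \<open>0 \<le> \<tau>\<close>
    by (intro mult_left_mono) auto
  finally show ?thesis unfolding a_def b_def by (simp add: algebra_simps)
qed

theorem theorem3p8:
  fixes Lop :: "'a::{real_inner, complete_space} \<Rightarrow> 'a"
    and f :: "'a \<Rightarrow> real" and gradf :: "'a \<Rightarrow> 'a"
    and M S :: "'a \<Rightarrow> 'a \<Rightarrow> 'a"
    and L \<alpha>M \<beta>S \<tau> A :: real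
    and \<Phi>m \<Phi>0 \<Phi>1 \<Phi>hat :: 'a
  assumes Lop: "spd_op Lop"
    and fderiv: "\<And>x. (f has_derivative (\<lambda>h. inner (gradf x) h)) (at x)"
    and L_nonneg: "0 \<le> L"
    and lip: "\<And>x y. norm (gradf x - gradf y) \<le> L * norm (x - y)"
    and S_skew: "\<And>\<Phi>. skew_op (S \<Phi>)"
    and M_neg: "\<And>\<Phi>. spd_op (\<lambda>\<Psi>. - M \<Phi> \<Psi>)"
    and \<alpha>_pos: "\<alpha>M > 0" and \<beta>_pos: "\<beta>S > 0"
    and S_bound: "\<And>\<Phi> \<Psi>1 \<Psi>2. inner (S \<Phi> \<Psi>1) \<Psi>2 \<le> \<beta>S * norm \<Psi>1 * norm \<Psi>2"
    and M_coerc: "\<And>\<Phi> \<Psi>. inner (- M \<Phi> \<Psi>) \<Psi> \<ge> \<alpha>M * (norm \<Psi>)\<^sup>2"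
    and \<tau>_pos: "\<tau> > 0" and A_pos: "A > 0"
    and scheme: "(1/\<tau>) *\<^sub>R (\<Phi>1 - \<Phi>0) = M \<Phi>hat \<mu> + S \<Phi>hat \<mu>"
    and mu_def: "\<mu> = Lop ((1/2) *\<^sub>R (\<Phi>1 + \<Phi>0)) - (\<tau> * A) *\<^sub>R M \<Phi>hat (\<Phi>1 - \<Phi>0)
                    + (3/2) *\<^sub>R gradf \<Phi>0 - (1/2) *\<^sub>R gradf \<Phi>m"
    and A_large: "A \<ge> L\<^sup>2 / 4 * (1 + \<beta>S / \<alpha>M)\<^sup>2"
  shows "E_CN Lop f L \<Phi>1 \<Phi>0 - E_CN Lop f L \<Phi>0 \<Phi>m
           \<le> - (2 * inverse (1 + \<beta>S / \<alpha>M) * sqrt A - L) * (norm (\<Phi>1 - \<Phi>0))\<^sup>2"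
proof -
  define d P where "d = \<Phi>1 - \<Phi>0" and "P = (\<lambda>\<Psi>. - M \<Phi>hat \<Psi>)"
  have P_sym: "sym_op P" using M_neg[of \<Phi>hat] unfolding spd_op_def P_def by simp
  have P_coerc: "\<And>x. \<alpha>M * (norm x)\<^sup>2 \<le> inner (P x) x" using M_coerc unfolding P_def by simp
  have step: "d = \<tau> *\<^sub>R (S \<Phi>hat \<mu> - P \<mu>)"
    using arg_cong[OF scheme, of "scaleR \<tau>"] \<tau>_pos unfolding d_def P_def by simp
  have energy: "E_CN Lop f L \<Phi>1 \<Phi>0 - E_CN Lop f L \<Phi>0 \<Phi>m
      = inner (Lop ((1/2) *\<^sub>R (\<Phi>1 + \<Phi>0))) d + (f \<Phi>1 - f \<Phi>0)
        + L/4 * ((norm d)\<^sup>2 - (norm (\<Phi>0 - \<Phi>m))\<^sup>2)"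
    using E_CN_diff Lop unfolding spd_op_def d_def by blast
  have mu_d: "inner \<mu> d = inner (Lop ((1/2) *\<^sub>R (\<Phi>1 + \<Phi>0))) d + \<tau> * A * inner (P d) d
      + inner (gradf \<Phi>0) d + (1/2) * inner (gradf \<Phi>0 - gradf \<Phi>m) d"
    unfolding mu_def P_def d_def by (simp add: inner_add_left inner_diff_left algebra_simps)
  have "f \<Phi>1 - f \<Phi>0 - inner (gradf \<Phi>0) d \<le> L / 2 * (norm d)\<^sup>2"
    using lipschitz_gradient_upper_bound[OF fderiv lip] unfolding d_def .
  moreover have "- inner (gradf \<Phi>0 - gradf \<Phi>m) d \<le> L/2 * ((norm (\<Phi>0 - \<Phi>m))\<^sup>2 + (norm d)\<^sup>2)"
    by (rule lipschitz_gradient_extrapolation_bound[OF lip L_nonneg])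
  moreover have "inner \<mu> d = - \<tau> * inner (P \<mu>) \<mu>"
    using S_skew step by (rule skew_step_inner_mu)
  moreover have "2 * inverse (1 + \<beta>S / \<alpha>M) * sqrt A * (norm d)\<^sup>2
      \<le> \<tau> * inner (P \<mu>) \<mu> + \<tau> * A * inner (P d) d"
    using \<alpha>_pos \<beta>_pos \<tau>_pos A_pos
    by (intro skew_step_stabilization_bound[OF P_sym P_coerc S_bound[of \<Phi>hat] _ _ _ _ step]) auto
  ultimately show ?thesis
    unfolding energy d_def[symmetric] using mu_d by (simp add: algebra_simps)
qed

end
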